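(* Let $G$ be a graph of girth at least $6$ having exactly one vertex $x$ of type $2$ and no vertex of type $k$ for any $k\geq 3$. Then $G$ is almost well-covered if and only if every internal vertex of $G$ other than $x$ is of type $0$ or $1$, $N(x)\cap V(G_0)=\emptyset$, $G_0$ is well-covered, and for every independent set $I$ in $G_1$ the following hold: (a) $\alpha(G_0)=i(G_0-N(I))$ if $I\cap N(x)=\emptyset$, and (b) $\alpha(G_0)-i(G_0-N(I))\leq 1$ if $I\cap N(x)\neq\emptyset$.
   Context: All graphs are finite and simple. The girth of a graph is the length of a shortest cycle (infinite for acyclic graphs). For a graph $H$, $\alpha(H)$ is the maximum size of an independent set and $i(H)$ is the minimum size of an inclusion-maximal independent set (both $0$ for the null graph). $H$ is well-covered if $\alpha(H)=i(H)$ and almost well-covered if $\alpha(H)-i(H)=1$. $N(v)$ is the neighborhood of $v$, $N(I)=\bigcup_{v\in I}N(v)$, and $G_0-N(I)$ denotes the graph obtained from $G_0$ by deleting the vertices of $N(I)$. Types of vertices: let $U$ be the set of vertices of $G$ whose connected component is a complete graph. In $G-U$, vertices of degree $1$ are leaves and the others are internal vertices. An internal vertex adjacent to exactly $k$ leaves is of type $k$; every vertex of $U$ is of type $0$. $G_i$ denotes the subgraph of $G$ induced by all vertices of type $i$. *)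

theory Defs
  imports Main
begin

definition graph :: "'a set \<Rightarrow> ('a \<Rightarrow> 'a \<Rightarrow> bool) \<Rightarrow> bool" where
  "graph V E \<longleftrightarrow> finite V \<and> (\<forall>u v. E u v \<longrightarrow> u \<in> V \<and> v \<in> V)
     \<and> (\<forall>u v. E u v \<longrightarrow> E v u) \<and> (\<forall>v. \<not> E v v)"

definition is_cycle :: "'a set \<Rightarrow> ('a \<Rightarrow> 'a \<Rightarrow> bool) \<Rightarrow> 'a list \<Rightarrow> bool" where
  "is_cycle V E cs \<longleftrightarrow> distinct cs \<and> length cs \<ge> 3 \<and> set cs \<subseteq> V \<and>
     (\<forall>i < length cs. E (cs ! i) (cs ! ((i + 1) mod length cs)))"

definition girth_at_least :: "'a set \<Rightarrow> ('a \<Rightarrow> 'a \<Rightarrow> bool) \<Rightarrow> nat \<Rightarrow> bool" where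
  "girth_at_least V E n \<longleftrightarrow> (\<forall>cs. is_cycle V E cs \<longrightarrow> length cs \<ge> n)"

definition indep :: "('a \<Rightarrow> 'a \<Rightarrow> bool) \<Rightarrow> 'a set \<Rightarrow> 'a set \<Rightarrow> bool" where
  "indep E S I \<longleftrightarrow> I \<subseteq> S \<and> (\<forall>u\<in>I. \<forall>v\<in>I. \<not> E u v)"

definition maximal_indep :: "('a \<Rightarrow> 'a \<Rightarrow> bool) \<Rightarrow> 'a set \<Rightarrow> 'a set \<Rightarrow> bool" where
  "maximal_indep E S I \<longleftrightarrow> indep E S I \<and> (\<forall>v \<in> S - I. \<not> indep E S (insert v I))"

definition alpha :: "('a \<Rightarrow> 'a \<Rightarrow> bool) \<Rightarrow> 'a set \<Rightarrow> nat" where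
  "alpha E S = Max (card ` {I. indep E S I})"

definition indep_dom :: "('a \<Rightarrow> 'a \<Rightarrow> bool) \<Rightarrow> 'a set \<Rightarrow> nat" where
  "indep_dom E S = Min (card ` {I. maximal_indep E S I})"

definition well_covered :: "('a \<Rightarrow> 'a \<Rightarrow> bool) \<Rightarrow> 'a set \<Rightarrow> bool" where
  "well_covered E S \<longleftrightarrow> alpha E S = indep_dom E S"

definition almost_well_covered :: "('a \<Rightarrow> 'a \<Rightarrow> bool) \<Rightarrow> 'a set \<Rightarrow> bool" where
  "almost_well_covered E S \<longleftrightarrow> int (alpha E S) - int (indep_dom E S) = 1"

definition nbhd :: "('a \<Rightarrow> 'a \<Rightarrow> bool) \<Rightarrow> 'a \<Rightarrow> 'a set" where
  "nbhd E v = {u. E v u}"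

definition nbhd_set :: "('a \<Rightarrow> 'a \<Rightarrow> bool) \<Rightarrow> 'a set \<Rightarrow> 'a set" where
  "nbhd_set E I = (\<Union>v\<in>I. nbhd E v)"

definition component :: "'a set \<Rightarrow> ('a \<Rightarrow> 'a \<Rightarrow> bool) \<Rightarrow> 'a \<Rightarrow> 'a set" where
  "component V E v = {u \<in> V. E\<^sup>*\<^sup>* v u}"

definition Uset :: "'a set \<Rightarrow> ('a \<Rightarrow> 'a \<Rightarrow> bool) \<Rightarrow> 'a set" where
  "Uset V E = {v \<in> V. \<forall>a \<in> component V E v. \<forall>b \<in> component V E v. a \<noteq> b \<longrightarrow> E a b}"

text \<open>Leaves and internal vertices of G - U (degree taken in G - U).\<close>
definition leaf :: "'a set \<Rightarrow> ('a \<Rightarrow> 'a \<Rightarrow> bool) \<Rightarrow> 'a \<Rightarrow> bool" where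
  "leaf V E v \<longleftrightarrow> v \<in> V - Uset V E \<and> card {u \<in> V - Uset V E. E v u} = 1"

definition internal :: "'a set \<Rightarrow> ('a \<Rightarrow> 'a \<Rightarrow> bool) \<Rightarrow> 'a \<Rightarrow> bool" where
  "internal V E v \<longleftrightarrow> v \<in> V - Uset V E \<and> \<not> leaf V E v"

definition has_type :: "'a set \<Rightarrow> ('a \<Rightarrow> 'a \<Rightarrow> bool) \<Rightarrow> nat \<Rightarrow> 'a \<Rightarrow> bool" where
  "has_type V E k v \<longleftrightarrow>
     (internal V E v \<and> card {u \<in> V. leaf V E u \<and> E v u} = k) \<or> (v \<in> Uset V E \<and> k = 0)"

definition type_set :: "'a set \<Rightarrow> ('a \<Rightarrow> 'a \<Rightarrow> bool) \<Rightarrow> nat \<Rightarrow> 'a set" where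
  "type_set V E k = {v \<in> V. has_type V E k v}"

end

theory Submission
  imports Defs
begin

text \<open>Besides \<open>G\<^sub>0\<close>, the graph consists of \<open>G\<^sub>1\<close>, one pendant leaf at each vertex of \<open>G\<^sub>1\<close>,
  and \<open>x\<close> with its two leaves. A maximal independent set \<open>J\<close> takes exactly one vertex of each
  pair \<open>v\<close>, \<open>pendant v\<close>, takes either \<open>x\<close> or both of its leaves, and meets \<open>G\<^sub>0\<close> in a maximal
  independent set of \<open>G\<^sub>0 - N(J \<inter> V(G\<^sub>1))\<close>, with \<open>N(x)\<close> also removed if \<open>x \<in> J\<close>; conversely
  every such choice is realised. Hence \<open>\<alpha>(G) = \<alpha>(G\<^sub>0) + |V(G\<^sub>1)| + 2\<close>, while \<open>i(G)\<close> is the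
  minimum over these choices of \<open>i\<close> of the residual graph plus \<open>|V(G\<^sub>1)| + 1\<close> or \<open>+ 2\<close>.
  So \<open>G\<close> is almost well-covered iff every residual has \<open>i \<ge> \<alpha>(G\<^sub>0)\<close> when \<open>x\<close> is taken and
  \<open>i \<ge> \<alpha>(G\<^sub>0) - 1\<close> otherwise. By girth \<open>6\<close> the first requirement forces \<open>N(x) \<inter> V(G\<^sub>0) = \<emptyset>\<close>;
  after that the residuals no longer depend on \<open>x\<close>, and the condition becomes (a) and (b).\<close>

lemma indep_empty [simp]: "indep E S {}"
  by (simp add: indep_def)

lemma indep_mono_carrier: "indep E S I \<Longrightarrow> S \<subseteq> S' \<Longrightarrow> indep E S' I"
  by (auto simp: indep_def)

lemma finite_indep_sets: "finite S \<Longrightarrow> finite {I. indep E S I}"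
  by (rule finite_subset[of _ "Pow S"]) (auto simp: indep_def)

lemma finite_maximal_indep_sets: "finite S \<Longrightarrow> finite {I. maximal_indep E S I}"
  by (rule finite_subset[of _ "Pow S"]) (auto simp: maximal_indep_def indep_def)

lemma card_le_alpha: "finite S \<Longrightarrow> indep E S I \<Longrightarrow> card I \<le> alpha E S"
  unfolding alpha_def by (rule Max_ge) (auto intro: finite_indep_sets)

lemma ex_indep_card_alpha: "finite S \<Longrightarrow> \<exists>I. indep E S I \<and> card I = alpha E S"
proof -
  assume "finite S"
  then have "alpha E S \<in> card ` {I. indep E S I}"
    unfolding alpha_def by (intro Max_in) (auto intro: finite_indep_sets indep_empty)
  then show ?thesis by auto
qed

lemma alpha_mono: "finite S' \<Longrightarrow> S \<subseteq> S' \<Longrightarrow> alpha E S \<le> alpha E S'"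
  by (metis card_le_alpha ex_indep_card_alpha finite_subset indep_mono_carrier)

lemma ex_maximal_indep_superset:
  assumes "finite S" "indep E S I"
  shows "\<exists>K. I \<subseteq> K \<and> maximal_indep E S K"
  using assms(2)
proof (induction "card (S - I)" arbitrary: I rule: less_induct)
  case less
  show ?case
  proof (cases "maximal_indep E S I")
    case False
    then obtain v where v: "v \<in> S - I" "indep E S (insert v I)"
      using less.prems by (auto simp: maximal_indep_def)
    have "card (S - insert v I) < card (S - I)"
      using v(1) assms(1) by (metis Diff_insert card_Diff1_less finite_Diff)
    then obtain K where "insert v I \<subseteq> K" "maximal_indep E S K"
      using less.hyps v(2) by blast
    then show ?thesis by blast
  qed blast
qed

lemma indep_dom_le_card: "finite S \<Longrightarrow> maximal_indep E S K \<Longrightarrow> indep_dom E S \<le> card K"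
  unfolding indep_dom_def by (rule Min_le) (auto intro: finite_maximal_indep_sets)

lemma ex_maximal_indep_card_indep_dom:
  assumes "finite S" shows "\<exists>K. maximal_indep E S K \<and> card K = indep_dom E S"
proof -
  obtain K where "maximal_indep E S K"
    using ex_maximal_indep_superset[OF assms indep_empty] by blast
  then have "indep_dom E S \<in> card ` {I. maximal_indep E S I}"
    unfolding indep_dom_def by (intro Min_in) (auto intro: finite_maximal_indep_sets assms)
  then show ?thesis by auto
qed

lemma indep_dom_le_alpha: "finite S \<Longrightarrow> indep_dom E S \<le> alpha E S"
  by (metis card_le_alpha ex_maximal_indep_card_indep_dom maximal_indep_def)

lemma indep_dom_le_alpha_superset: "finite S \<Longrightarrow> T \<subseteq> S \<Longrightarrow> indep_dom E T \<le> alpha E S"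
  by (meson alpha_mono finite_subset indep_dom_le_alpha le_trans)

lemma mem_nbhd_iff [simp]: "u \<in> nbhd E v \<longleftrightarrow> E v u"
  by (simp add: nbhd_def)

lemma mem_nbhd_set_iff: "u \<in> nbhd_set E I \<longleftrightarrow> (\<exists>v\<in>I. E v u)"
  by (simp add: nbhd_set_def)

lemma not_indep_insert_adj: "u \<in> J \<Longrightarrow> E v u \<Longrightarrow> \<not> indep E S (insert v J)"
  by (auto simp: indep_def)

lemma successively_nth:
  "successively P xs \<Longrightarrow> Suc i < length xs \<Longrightarrow> P (xs ! i) (xs ! Suc i)"
  by (induction P xs arbitrary: i rule: successively.induct) (auto simp: nth_Cons split: nat.splits)

locale simple_graph =
  fixes V :: "'a set" and E :: "'a \<Rightarrow> 'a \<Rightarrow> bool"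
  assumes graph: "graph V E"
begin

lemma finite_V: "finite V"
  using graph by (simp add: graph_def)

lemma edge_in_V: "E u v \<Longrightarrow> u \<in> V \<and> v \<in> V"
  using graph by (simp add: graph_def)

lemma edge_sym: "E u v \<Longrightarrow> E v u"
  using graph by (simp add: graph_def)

lemma edge_irrefl: "\<not> E v v"
  using graph by (simp add: graph_def)

lemma indep_insert:
  "indep E S J \<Longrightarrow> a \<in> S \<Longrightarrow> \<forall>u\<in>J. \<not> E a u \<Longrightarrow> indep E S (insert a J)"
  unfolding indep_def using edge_sym edge_irrefl by blast

lemma ex_adj_if_not_indep_insert:
  "indep E S J \<Longrightarrow> a \<in> S \<Longrightarrow> \<not> indep E S (insert a J) \<Longrightarrow> \<exists>u\<in>J. E a u"
  using indep_insert by blast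

lemma girth_le_cycle_length:
  assumes "girth_at_least V E n" "distinct cs" "3 \<le> length cs"
    and "successively E cs" "E (last cs) (hd cs)"
  shows "n \<le> length cs"
proof -
  have step: "E (cs ! i) (cs ! ((i + 1) mod length cs))" if i: "i < length cs" for i
  proof (cases "Suc i < length cs")
    case True
    then show ?thesis using successively_nth[OF assms(4)] by simp
  next
    case False
    then have "Suc i = length cs" using i by simp
    then have "i = length cs - 1" "(i + 1) mod length cs = 0" by auto
    moreover have "cs \<noteq> []" using i by auto
    ultimately show ?thesis using assms(5) by (simp add: last_conv_nth hd_conv_nth)
  qed
  have "set cs \<subseteq> V"
  proof
    fix v assume "v \<in> set cs"
    then obtain i where "i < length cs" "cs ! i = v" by (auto simp: in_set_conv_nth)
    then show "v \<in> V" using step edge_in_V by blast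
  qed
  then show ?thesis using assms(1-3) step unfolding girth_at_least_def is_cycle_def by blast
qed

lemma component_eq_if_adj:
  assumes "E u v" shows "component V E u = component V E v"
proof -
  have "E\<^sup>*\<^sup>* u w \<longleftrightarrow> E\<^sup>*\<^sup>* v w" for w
    using assms edge_sym[OF assms] by (meson converse_rtranclp_into_rtranclp)
  then show ?thesis unfolding component_def by auto
qed

lemma Uset_adj_iff: "E u v \<Longrightarrow> u \<in> Uset V E \<longleftrightarrow> v \<in> Uset V E"
  using component_eq_if_adj edge_in_V unfolding Uset_def by auto

definition stem :: "'a \<Rightarrow> 'a" where
  "stem l = (THE s. E l s)"

lemma leaf_adj_iff_stem:
  assumes "leaf V E l" shows "E l u \<longleftrightarrow> u = stem l"
proof -
  have "l \<notin> Uset V E" using assms by (simp add: leaf_def)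
  then have "{u \<in> V - Uset V E. E l u} = {u. E l u}" using edge_in_V Uset_adj_iff by auto
  moreover have "card {u \<in> V - Uset V E. E l u} = 1" using assms by (simp add: leaf_def)
  ultimately obtain s where s: "\<forall>u. E l u \<longleftrightarrow> u = s"
    by (metis card_1_singletonE mem_Collect_eq singletonD singletonI)
  then have "stem l = s" unfolding stem_def by auto
  then show ?thesis using s by simp
qed

lemma adj_leaf_iff_stem: "leaf V E l \<Longrightarrow> E u l \<longleftrightarrow> u = stem l"
  using leaf_adj_iff_stem edge_sym by blast

text \<open>A leaf whose neighbour is a leaf forms a component \<open>K\<^sub>2\<close>, which lies in \<open>U\<close>.\<close>
lemma stem_not_leaf:
  assumes "leaf V E l" shows "\<not> leaf V E (stem l)"
proof
  let ?s = "stem l"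
  assume s: "leaf V E ?s"
  have l_adj: "E l u \<longleftrightarrow> u = ?s" for u using leaf_adj_iff_stem[OF assms] .
  have s_adj: "E ?s u \<longleftrightarrow> u = l" for u using leaf_adj_iff_stem[OF s] l_adj edge_sym by metis
  have reach: "E\<^sup>*\<^sup>* l w \<Longrightarrow> w \<in> {l, ?s}" for w
  proof (induction rule: rtranclp_induct)
    case (step y z)
    then show ?case using l_adj s_adj by blast
  qed simp
  have "l \<in> V" using assms by (simp add: leaf_def)
  then have "l \<in> Uset V E"
    unfolding Uset_def component_def using reach l_adj s_adj by fastforce
  then show False using assms by (simp add: leaf_def)
qed

lemma internal_ex_other_adj:
  assumes "internal V E v" "E v y" shows "\<exists>w. E v w \<and> w \<noteq> y"
proof (rule ccontr)
  assume none: "\<not> ?thesis"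
  have "y \<notin> Uset V E"
    using Uset_adj_iff[OF assms(2)] assms(1) by (simp add: internal_def)
  then have "{u \<in> V - Uset V E. E v u} = {y}"
    using none assms(2) edge_in_V[OF assms(2)] by blast
  then show False using assms(1) unfolding internal_def leaf_def by auto
qed

lemma has_type_unique: "has_type V E j v \<Longrightarrow> has_type V E k v \<Longrightarrow> j = k"
  unfolding has_type_def internal_def by auto

lemma leaf_has_no_type: "leaf V E l \<Longrightarrow> \<not> has_type V E k l"
  unfolding has_type_def internal_def leaf_def by auto

definition leaves_at :: "'a \<Rightarrow> 'a set" where
  "leaves_at v = {u \<in> V. leaf V E u \<and> E v u}"

lemma internal_has_type_card_leaves_at:
  "internal V E v \<Longrightarrow> has_type V E (card (leaves_at v)) v"
  unfolding has_type_def leaves_at_def by auto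

end

locale girth6_graph = simple_graph +
  assumes girth6: "girth_at_least V E 6"
begin

lemma no_triangle:
  assumes "E a b" "E b c" "E c a" shows False
proof -
  have "distinct [a, b, c]" using assms edge_irrefl by auto
  then show False using girth_le_cycle_length[OF girth6, of "[a, b, c]"] assms by simp
qed

lemma no_4cycle:
  assumes "E a b" "E b c" "E c d" "E d a" "a \<noteq> c" "b \<noteq> d" shows False
proof -
  have "distinct [a, b, c, d]" using assms edge_irrefl by auto
  then show False using girth_le_cycle_length[OF girth6, of "[a, b, c, d]"] assms by simp
qed

lemma no_5cycle:
  assumes "E a b" "E b c" "E c d" "E d e" "E e a"
    and "a \<noteq> c" "a \<noteq> d" "b \<noteq> d" "b \<noteq> e" "c \<noteq> e"
  shows False
proof -
  have "distinct [a, b, c, d, e]" using assms edge_irrefl by auto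
  then show False using girth_le_cycle_length[OF girth6, of "[a, b, c, d, e]"] assms by simp
qed

lemma second_neighbours_not_adj:
  assumes "E y z" "E y z'" "E z w" "E z' w'" "w \<noteq> y" "w' \<noteq> y"
  shows "\<not> E w w'"
proof
  assume ww': "E w w'"
  show False
  proof (cases "z = z'")
    case True
    then show ?thesis using no_triangle[OF assms(3) ww'] assms(4) edge_sym edge_irrefl by metis
  next
    case False
    have "z \<noteq> w'"
      using no_triangle[OF assms(1)] assms(2,4) edge_sym by metis
    moreover have "w \<noteq> z'"
      using no_triangle[OF assms(2)] assms(1,3) edge_sym by metis
    ultimately show False
      using no_5cycle[OF assms(1,3) ww' edge_sym[OF assms(4)] edge_sym[OF assms(2)]] assms(5,6) False
      by blast
  qed
qed

end

locale girth6_type2_graph = girth6_graph +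
  fixes x :: 'a
  assumes x_in_V: "x \<in> V" and x_type2: "has_type V E 2 x"
    and type2_unique: "\<forall>v \<in> V. has_type V E 2 v \<longrightarrow> v = x"
    and no_type_ge3: "\<forall>v \<in> V. \<forall>k \<ge> 3. \<not> has_type V E k v"
begin

abbreviation "T0 \<equiv> type_set V E 0"
abbreviation "T1 \<equiv> type_set V E 1"

lemma x_internal: "internal V E x"
  using x_type2 unfolding has_type_def by auto

lemma card_leaves_at_lt3: "internal V E v \<Longrightarrow> card (leaves_at v) < 3"
  using no_type_ge3 internal_has_type_card_leaves_at
  by (metis internal_def Diff_iff not_less)

lemma vertex_cases: "v \<in> V \<Longrightarrow> v \<in> T0 \<or> v \<in> T1 \<or> v = x \<or> leaf V E v"
proof -
  assume v: "v \<in> V"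
  consider "v \<in> Uset V E" | "leaf V E v" | "internal V E v"
    using v unfolding internal_def by auto
  then show ?thesis
  proof cases
    case 1
    then show ?thesis unfolding type_set_def has_type_def using v by auto
  next
    case 3
    have t: "has_type V E (card (leaves_at v)) v"
      using internal_has_type_card_leaves_at[OF 3] .
    have "card (leaves_at v) < 3" using card_leaves_at_lt3[OF 3] .
    then consider "card (leaves_at v) = 0" | "card (leaves_at v) = 1" | "card (leaves_at v) = 2"
      by linarith
    then show ?thesis using t v type2_unique unfolding type_set_def by cases auto
  qed simp
qed

lemma internal_type_0_or_1:
  "\<forall>v \<in> V. internal V E v \<and> v \<noteq> x \<longrightarrow> has_type V E 0 v \<or> has_type V E 1 v"
  using vertex_cases unfolding type_set_def internal_def by blast

lemma x_notin_T0: "x \<notin> T0" and x_notin_T1: "x \<notin> T1"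
  using x_type2 has_type_unique unfolding type_set_def by fastforce+

lemma T0_notin_T1: "v \<in> T0 \<Longrightarrow> v \<notin> T1"
  using has_type_unique unfolding type_set_def by fastforce

lemma leaf_notin_T0: "leaf V E l \<Longrightarrow> l \<notin> T0" and leaf_notin_T1: "leaf V E l \<Longrightarrow> l \<notin> T1"
  using leaf_has_no_type unfolding type_set_def by auto

lemma leaf_neq_x: "leaf V E l \<Longrightarrow> l \<noteq> x"
  using leaf_has_no_type x_type2 by auto

lemma stem_in_T1_or_x:
  assumes "leaf V E l" shows "stem l \<in> T1 \<or> stem l = x"
proof -
  let ?s = "stem l"
  have ls: "E l ?s" using leaf_adj_iff_stem[OF assms] by simp
  have sV: "?s \<in> V" using edge_in_V[OF ls] by simp
  have "?s \<notin> Uset V E" using Uset_adj_iff[OF ls] assms by (simp add: leaf_def)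
  then have s: "internal V E ?s" using sV stem_not_leaf[OF assms] unfolding internal_def by simp
  have "l \<in> leaves_at ?s" unfolding leaves_at_def using assms edge_sym[OF ls] by (auto simp: leaf_def)
  moreover have "finite (leaves_at ?s)" using finite_V unfolding leaves_at_def by simp
  ultimately have "card (leaves_at ?s) \<noteq> 0" by auto
  then consider "card (leaves_at ?s) = 1" | "card (leaves_at ?s) = 2"
    using card_leaves_at_lt3[OF s] by linarith
  then show ?thesis
    using internal_has_type_card_leaves_at[OF s] sV type2_unique unfolding type_set_def by cases auto
qed

lemma T0_not_adj_leaf: "v \<in> T0 \<Longrightarrow> leaf V E l \<Longrightarrow> \<not> E v l"
  using adj_leaf_iff_stem stem_in_T1_or_x T0_notin_T1 x_notin_T0 by metis

definition pendant :: "'a \<Rightarrow> 'a" where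
  "pendant v = (SOME l. leaf V E l \<and> E v l)"

lemma leaves_at_T1: assumes "v \<in> T1" shows "leaves_at v = {pendant v}"
proof -
  have "v \<in> V" "internal V E v" using assms unfolding type_set_def has_type_def by auto
  then have "card (leaves_at v) = 1"
    using internal_has_type_card_leaves_at assms has_type_unique unfolding type_set_def by blast
  then obtain l where l: "leaves_at v = {l}" by (meson card_1_singletonE)
  then have "leaf V E l \<and> E v l" unfolding leaves_at_def by auto
  moreover have "l' = l" if "leaf V E l' \<and> E v l'" for l'
    using l that unfolding leaves_at_def leaf_def by auto
  ultimately have "pendant v = l" unfolding pendant_def by (metis (mono_tags, lifting) someI)
  then show ?thesis using l by simp
qed

lemma pendant:
  assumes "v \<in> T1" shows "leaf V E (pendant v)" "E v (pendant v)" "stem (pendant v) = v"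
proof -
  have "pendant v \<in> leaves_at v" using leaves_at_T1[OF assms] by simp
  then show l: "leaf V E (pendant v)" and e: "E v (pendant v)" unfolding leaves_at_def by auto
  show "stem (pendant v) = v" using adj_leaf_iff_stem[OF l] e by simp
qed

lemma card_leaves_at_x: "card (leaves_at x) = 2"
  using internal_has_type_card_leaves_at[OF x_internal] x_type2 has_type_unique by blast

lemma leaf_cases:
  assumes "leaf V E l" shows "(\<exists>v \<in> T1. l = pendant v) \<or> l \<in> leaves_at x"
proof -
  have "l \<in> leaves_at (stem l)"
    using assms adj_leaf_iff_stem[OF assms] unfolding leaves_at_def leaf_def by simp
  then show ?thesis using stem_in_T1_or_x[OF assms] leaves_at_T1 by fastforce
qed

lemma ex_second_neighbour:
  assumes "E x y" "E y z" "z \<in> T0"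
  shows "\<exists>w. E z w \<and> w \<noteq> y \<and> (w \<in> T0 \<or> w \<in> T1)"
proof -
  have "y \<notin> Uset V E" using Uset_adj_iff[OF assms(1)] x_internal by (simp add: internal_def)
  then have "z \<notin> Uset V E" using Uset_adj_iff[OF assms(2)] by simp
  then have "internal V E z" using assms(3) unfolding type_set_def has_type_def by auto
  then obtain w where w: "E z w" "w \<noteq> y" using internal_ex_other_adj edge_sym[OF assms(2)] by blast
  have "w \<noteq> x" using no_triangle[OF assms(1,2)] w(1) by auto
  moreover have "\<not> leaf V E w" using T0_not_adj_leaf assms(3) w(1) by auto
  ultimately show ?thesis using vertex_cases edge_in_V w by blast
qed

end

locale girth6_type2_graph_leaves = girth6_type2_graph +
  fixes l1 l2 :: 'a
  assumes l1_neq_l2: "l1 \<noteq> l2" and leaves_at_x: "leaves_at x = {l1, l2}"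
begin

lemma x_leaves: "leaf V E l1" "leaf V E l2" "E x l1" "E x l2" "stem l1 = x" "stem l2 = x"
proof -
  have "l1 \<in> leaves_at x" "l2 \<in> leaves_at x" using leaves_at_x by auto
  then show l: "leaf V E l1" "leaf V E l2" and e: "E x l1" "E x l2"
    unfolding leaves_at_def by auto
  show "stem l1 = x" "stem l2 = x"
    using adj_leaf_iff_stem[OF l(1)] adj_leaf_iff_stem[OF l(2)] e by auto
qed

lemma finite_T0: "finite T0" and finite_T1: "finite T1"
  using finite_V unfolding type_set_def by auto

lemma T0_subset_V: "T0 \<subseteq> V" and T1_subset_V: "T1 \<subseteq> V"
  unfolding type_set_def by auto

lemma inj_on_pendant: "inj_on pendant T1"
  by (metis inj_onI pendant(3))

lemma V_partition: "V = T0 \<union> T1 \<union> pendant ` T1 \<union> {x, l1, l2}"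
proof
  show "V \<subseteq> T0 \<union> T1 \<union> pendant ` T1 \<union> {x, l1, l2}"
    using vertex_cases leaf_cases leaves_at_x by blast
  show "T0 \<union> T1 \<union> pendant ` T1 \<union> {x, l1, l2} \<subseteq> V"
    using x_in_V x_leaves pendant T0_subset_V T1_subset_V by (auto simp: leaf_def)
qed

lemma partition_disjoint:
  "T0 \<inter> T1 = {}" "T0 \<inter> pendant ` T1 = {}" "T0 \<inter> {x, l1, l2} = {}"
  "T1 \<inter> pendant ` T1 = {}" "T1 \<inter> {x, l1, l2} = {}" "pendant ` T1 \<inter> {x, l1, l2} = {}"
proof -
  show "T0 \<inter> T1 = {}" using T0_notin_T1 by blast
  show "T0 \<inter> pendant ` T1 = {}" using pendant(1) leaf_notin_T0 by blast
  show "T0 \<inter> {x, l1, l2} = {}" using x_notin_T0 x_leaves leaf_notin_T0 by blast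
  show "T1 \<inter> pendant ` T1 = {}" using pendant(1) leaf_notin_T1 by blast
  show "T1 \<inter> {x, l1, l2} = {}" using x_notin_T1 x_leaves leaf_notin_T1 by blast
  have "pendant v \<noteq> l1" "pendant v \<noteq> l2" "pendant v \<noteq> x" if "v \<in> T1" for v
    using pendant[OF that] x_leaves x_notin_T1 that leaf_neq_x by metis+
  then show "pendant ` T1 \<inter> {x, l1, l2} = {}" by blast
qed

lemma card_partition:
  assumes "J \<subseteq> V"
  shows "card J = card (J \<inter> T0) + card (J \<inter> T1) + card {v \<in> T1. pendant v \<in> J}
    + card (J \<inter> {x, l1, l2})"
proof -
  have fin: "finite J" using assms finite_V finite_subset by blast
  have "J \<inter> pendant ` T1 = pendant ` {v \<in> T1. pendant v \<in> J}" by auto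
  moreover have "inj_on pendant {v \<in> T1. pendant v \<in> J}"
    using inj_on_pendant by (rule inj_on_subset) auto
  ultimately have pend: "card (J \<inter> pendant ` T1) = card {v \<in> T1. pendant v \<in> J}"
    by (simp add: card_image)
  have "J = (J \<inter> T0) \<union> (J \<inter> T1) \<union> (J \<inter> pendant ` T1) \<union> (J \<inter> {x, l1, l2})"
    using assms V_partition by blast
  also have "card \<dots> = card (J \<inter> T0) + card (J \<inter> T1) + card (J \<inter> pendant ` T1)
      + card (J \<inter> {x, l1, l2})"
    using fin partition_disjoint by (subst card_Un_disjoint, auto)+
  finally show ?thesis using pend by simp
qed

lemma card_indep_le:
  assumes "indep E V J"
  shows "card J \<le> card (J \<inter> T0) + card T1 + 2"
proof -
  have "{v \<in> T1. pendant v \<in> J} \<subseteq> T1 - J"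
    using assms pendant(2) unfolding indep_def by blast
  then have "card (J \<inter> T1) + card {v \<in> T1. pendant v \<in> J} \<le> card (J \<inter> T1) + card (T1 - J)"
    by (intro add_left_mono card_mono) (use finite_T1 in auto)
  also have "\<dots> = card T1"
    using card_Int_Diff[OF finite_T1, of J] by (simp add: Int_commute)
  finally have T1_part: "card (J \<inter> T1) + card {v \<in> T1. pendant v \<in> J} \<le> card T1" .
  have "card (J \<inter> {x, l1, l2}) \<le> 2"
  proof (cases "x \<in> J")
    case True
    moreover have "l1 \<notin> J" "l2 \<notin> J" using assms True x_leaves unfolding indep_def by blast+
    ultimately have "J \<inter> {x, l1, l2} = {x}" by auto
    then show ?thesis by simp
  next
    case False
    then have "J \<inter> {x, l1, l2} \<subseteq> {l1, l2}" by auto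
    then show ?thesis by (metis card_2_iff card_mono finite.emptyI finite.insertI l1_neq_l2)
  qed
  then show ?thesis using card_partition assms T1_part unfolding indep_def by fastforce
qed

lemma card_maximal_indep:
  assumes J: "maximal_indep E V J"
  shows "card J = card (J \<inter> T0) + card T1 + (if x \<in> J then 1 else 2)"
proof -
  have ind: "indep E V J" using J unfolding maximal_indep_def by simp
  have leaf_in: "l \<in> J" if l: "leaf V E l" "stem l \<notin> J" for l
  proof (rule ccontr)
    have lV: "l \<in> V" using l(1) by (simp add: leaf_def)
    assume "l \<notin> J"
    then have "\<not> indep E V (insert l J)" using J lV unfolding maximal_indep_def by blast
    then obtain u where "u \<in> J" "E l u" using ex_adj_if_not_indep_insert ind lV by blast
    then show False using leaf_adj_iff_stem[OF l(1)] l(2) by auto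
  qed
  have "{v \<in> T1. pendant v \<in> J} = T1 - J"
  proof
    show "{v \<in> T1. pendant v \<in> J} \<subseteq> T1 - J" using ind pendant(2) unfolding indep_def by blast
    show "T1 - J \<subseteq> {v \<in> T1. pendant v \<in> J}" using leaf_in pendant by auto
  qed
  then have T1_part: "card (J \<inter> T1) + card {v \<in> T1. pendant v \<in> J} = card T1"
    using card_Int_Diff[OF finite_T1, of J] by (simp add: Int_commute)
  have "card (J \<inter> {x, l1, l2}) = (if x \<in> J then 1 else 2)"
  proof (cases "x \<in> J")
    case True
    moreover have "l1 \<notin> J" "l2 \<notin> J" using ind True x_leaves unfolding indep_def by blast+
    ultimately have Jx: "J \<inter> {x, l1, l2} = {x}" by auto
    show ?thesis unfolding Jx using True by simp
  next
    case False
    then have "J \<inter> {x, l1, l2} = {l1, l2}" using leaf_in x_leaves by auto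
    then show ?thesis using False l1_neq_l2 by simp
  qed
  then show ?thesis using card_partition ind T1_part unfolding indep_def by fastforce
qed

text \<open>The vertices of \<open>G\<^sub>0\<close> that may still join an independent set of \<open>G\<close> whose trace on \<open>T1\<close>
  is \<open>I\<close> and which contains \<open>x\<close> iff \<open>X\<close>.\<close>
definition residual :: "'a set \<Rightarrow> bool \<Rightarrow> 'a set" where
  "residual I X = T0 - nbhd_set E I - (if X then nbhd E x else {})"

lemma residual_subset_T0: "residual I X \<subseteq> T0"
  by (auto simp: residual_def)

lemma finite_residual: "finite (residual I X)"
  using finite_subset[OF residual_subset_T0 finite_T0] .

lemma residual_empty_False [simp]: "residual {} False = T0"
  by (simp add: residual_def nbhd_set_def)

lemma residual_eq_if_nbhd_x_disjoint:
  "nbhd E x \<inter> T0 = {} \<Longrightarrow> residual I X = T0 - nbhd_set E I"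
  by (auto simp: residual_def)

lemma maximal_indep_residual:
  assumes J: "maximal_indep E V J"
  shows "maximal_indep E (residual (J \<inter> T1) (x \<in> J)) (J \<inter> T0)"
proof -
  let ?H = "residual (J \<inter> T1) (x \<in> J)"
  have ind: "indep E V J" using J unfolding maximal_indep_def by simp
  have "J \<inter> T0 \<subseteq> ?H"
  proof
    fix v assume v: "v \<in> J \<inter> T0"
    have "\<not> E u v" if "u \<in> J" for u using ind v that unfolding indep_def by blast
    then show "v \<in> ?H" using v unfolding residual_def by (auto simp: mem_nbhd_set_iff)
  qed
  then have indH: "indep E ?H (J \<inter> T0)" using ind unfolding indep_def by auto
  have "\<not> indep E ?H (insert v (J \<inter> T0))" if v: "v \<in> ?H - J \<inter> T0" for v
  proof -
    have vT0: "v \<in> T0" "v \<notin> J" and vN: "v \<notin> nbhd_set E (J \<inter> T1)" "x \<in> J \<Longrightarrow> \<not> E x v"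
      using v unfolding residual_def by (auto split: if_splits)
    then have vV: "v \<in> V" using T0_subset_V by auto
    then have "\<not> indep E V (insert v J)" using J vT0 unfolding maximal_indep_def by auto
    then obtain u where u: "u \<in> J" "E v u" using ex_adj_if_not_indep_insert ind vV by blast
    have "u \<notin> T1" using vN(1) u edge_sym unfolding mem_nbhd_set_iff by blast
    moreover have "u \<noteq> x" using vN(2) u edge_sym by blast
    moreover have "\<not> leaf V E u" using T0_not_adj_leaf vT0 u by blast
    ultimately have "u \<in> T0" using vertex_cases edge_in_V[OF u(2)] by blast
    then show ?thesis using u not_indep_insert_adj by (metis IntI)
  qed
  then show ?thesis using indH unfolding maximal_indep_def by blast
qed

text \<open>Inverse of \<open>maximal_indep_residual\<close>: a maximal independent set of \<open>G\<close> is determined by its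
  traces on \<open>T1\<close>, on \<open>{x}\<close> and on \<open>G\<^sub>0\<close>.\<close>
definition assemble :: "'a set \<Rightarrow> bool \<Rightarrow> 'a set \<Rightarrow> 'a set" where
  "assemble I X K = I \<union> pendant ` (T1 - I) \<union> (if X then {x} else {l1, l2}) \<union> K"

lemma assemble_Int_T0: "I \<subseteq> T1 \<Longrightarrow> K \<subseteq> T0 \<Longrightarrow> assemble I X K \<inter> T0 = K"
  using partition_disjoint unfolding assemble_def by auto

lemma x_in_assemble_iff:
  assumes "I \<subseteq> T1" "K \<subseteq> T0" shows "x \<in> assemble I X K \<longleftrightarrow> X"
proof -
  have "x \<notin> I \<union> pendant ` (T1 - I) \<union> K"
    using assms partition_disjoint(6) x_notin_T0 x_notin_T1 by blast
  moreover have "x \<noteq> l1" "x \<noteq> l2" using leaf_neq_x x_leaves by metis+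
  ultimately show ?thesis unfolding assemble_def by auto
qed

lemma stem_notin_assemble:
  assumes "I \<subseteq> T1" "K \<subseteq> T0" "a \<in> assemble I X K" "leaf V E a"
  shows "stem a \<notin> assemble I X K"
proof -
  have "a \<notin> I" "a \<notin> K" using assms leaf_notin_T0 leaf_notin_T1 by auto
  then consider w where "w \<in> T1 - I" "a = pendant w" | "\<not> X" "a = l1 \<or> a = l2"
    using assms(3,4) leaf_neq_x unfolding assemble_def by (auto split: if_splits)
  then show ?thesis
  proof cases
    case 1
    then have "stem a = w" using pendant(3) by simp
    moreover have "w \<notin> pendant ` (T1 - I) \<union> {x, l1, l2} \<union> K"
      using 1 assms(2) partition_disjoint by blast
    ultimately show ?thesis using 1 unfolding assemble_def by auto
  next
    case 2
    then have "stem a = x" using x_leaves by auto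
    then show ?thesis using 2 x_in_assemble_iff assms(1,2) by simp
  qed
qed

lemma indep_assemble:
  assumes I: "indep E T1 I" and IX: "X \<Longrightarrow> I \<inter> nbhd E x = {}"
    and K: "indep E (residual I X) K"
  shows "indep E V (assemble I X K)"
proof -
  have IT1: "I \<subseteq> T1" using I unfolding indep_def by simp
  have KH: "K \<subseteq> residual I X" using K unfolding indep_def by simp
  then have KT0: "K \<subseteq> T0" using residual_subset_T0 by blast
  have "assemble I X K \<subseteq> V"
    using IT1 KT0 T0_subset_V T1_subset_V pendant(1) x_in_V x_leaves
    unfolding assemble_def by (auto simp: leaf_def)
  moreover have "\<not> E a b" if ab: "a \<in> assemble I X K" "b \<in> assemble I X K" for a b
  proof
    assume ab_adj: "E a b"
    show False
    proof (cases "leaf V E a \<or> leaf V E b")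
      case True
      then show ?thesis
        using stem_notin_assemble[OF IT1 KT0] leaf_adj_iff_stem adj_leaf_iff_stem ab ab_adj by metis
    next
      case False
      then have a: "a \<in> I \<or> a \<in> K \<or> (X \<and> a = x)" and b: "b \<in> I \<or> b \<in> K \<or> (X \<and> b = x)"
        using ab pendant(1) x_leaves unfolding assemble_def by (auto split: if_splits)
      have II: "\<not> E p q" if "p \<in> I" "q \<in> I" for p q using I that unfolding indep_def by blast
      have KK: "\<not> E p q" if "p \<in> K" "q \<in> K" for p q using K that unfolding indep_def by blast
      have IK: "\<not> E p q" if "p \<in> I" "q \<in> K" for p q
        using KH that unfolding residual_def by (auto simp: mem_nbhd_set_iff)
      have Ix: "\<not> E p x" if "p \<in> I" "X" for p using IX that edge_sym by auto
      have Kx: "\<not> E p x" if "p \<in> K" "X" for p using KH that edge_sym unfolding residual_def by auto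
      show False using a b ab_adj II KK IK Ix Kx edge_sym edge_irrefl by metis
    qed
  qed
  ultimately show ?thesis unfolding indep_def by blast
qed

lemma maximal_indep_assemble:
  assumes I: "indep E T1 I" and IX: "X \<Longrightarrow> I \<inter> nbhd E x = {}"
    and K: "maximal_indep E (residual I X) K"
  shows "maximal_indep E V (assemble I X K)"
proof -
  let ?J = "assemble I X K"
  have indK: "indep E (residual I X) K" using K unfolding maximal_indep_def by simp
  have IT1: "I \<subseteq> T1" using I unfolding indep_def by simp
  have KT0: "K \<subseteq> T0" using indK residual_subset_T0 unfolding indep_def by blast
  have "\<exists>u \<in> ?J. E v u" if v: "v \<in> V - ?J" for v
  proof -
    consider "v \<in> residual I X" | "v \<in> T0 - residual I X" | "v \<in> T1" | "v \<in> pendant ` T1"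
      | "v = x" | "v = l1 \<or> v = l2"
      using v V_partition by blast
    then show ?thesis
    proof cases
      case 1
      then have "\<not> indep E (residual I X) (insert v K)"
        using K v unfolding maximal_indep_def assemble_def by auto
      then show ?thesis using ex_adj_if_not_indep_insert[OF indK 1] unfolding assemble_def by blast
    next
      case 2
      then have "(\<exists>i \<in> I. E i v) \<or> (X \<and> E x v)"
        unfolding residual_def by (auto simp: mem_nbhd_set_iff split: if_splits)
      then show ?thesis using x_in_assemble_iff[OF IT1 KT0] edge_sym unfolding assemble_def by blast
    next
      case 3
      then show ?thesis using v pendant(2)[OF 3] unfolding assemble_def by blast
    next
      case 4
      then obtain w where "w \<in> T1" "v = pendant w" by blast
      then show ?thesis using v pendant(2) edge_sym unfolding assemble_def by fastforce
    next
      case 5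
      then show ?thesis using v x_in_assemble_iff[OF IT1 KT0] x_leaves unfolding assemble_def by auto
    next
      case 6
      then have "X" using v unfolding assemble_def by (auto split: if_splits)
      then show ?thesis using 6 x_leaves edge_sym unfolding assemble_def by auto
    qed
  qed
  then show ?thesis
    using indep_assemble[OF I IX indK] not_indep_insert_adj unfolding maximal_indep_def by metis
qed

lemma card_assemble:
  assumes "indep E T1 I" "X \<Longrightarrow> I \<inter> nbhd E x = {}" "maximal_indep E (residual I X) K"
  shows "card (assemble I X K) = card K + card T1 + (if X then 1 else 2)"
proof -
  have "I \<subseteq> T1" using assms(1) unfolding indep_def by simp
  moreover have "K \<subseteq> T0"
    using assms(3) residual_subset_T0 unfolding maximal_indep_def indep_def by blast
  ultimately show ?thesis
    using card_maximal_indep[OF maximal_indep_assemble[OF assms]]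
      assemble_Int_T0 x_in_assemble_iff by simp
qed

lemma alpha_eq: "alpha E V = alpha E T0 + card T1 + 2"
proof (rule antisym)
  obtain J where J: "indep E V J" "card J = alpha E V"
    using ex_indep_card_alpha finite_V by blast
  have "indep E T0 (J \<inter> T0)" using J(1) unfolding indep_def by auto
  then have "card (J \<inter> T0) \<le> alpha E T0" using card_le_alpha finite_T0 by blast
  then show "alpha E V \<le> alpha E T0 + card T1 + 2" using card_indep_le[OF J(1)] J(2) by linarith
next
  obtain M where M: "indep E T0 M" "card M = alpha E T0"
    using ex_indep_card_alpha finite_T0 by blast
  obtain K where K: "M \<subseteq> K" "maximal_indep E (residual {} False) K"
    using ex_maximal_indep_superset[OF finite_T0 M(1)] by auto
  have "finite K"
    using K(2) finite_residual finite_subset unfolding maximal_indep_def indep_def by blast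
  then have "card M \<le> card K" using K(1) card_mono by blast
  have "maximal_indep E V (assemble {} False K)"
    using maximal_indep_assemble[of "{}" False K] K(2) by simp
  then have "card (assemble {} False K) \<le> alpha E V"
    using card_le_alpha[OF finite_V] unfolding maximal_indep_def by blast
  then have "card K + card T1 + 2 \<le> alpha E V"
    using card_assemble[of "{}" False K] K(2) by simp
  with \<open>card M \<le> card K\<close> show "alpha E T0 + card T1 + 2 \<le> alpha E V" using M(2) by linarith
qed

lemma indep_dom_le_residual:
  assumes "indep E T1 I" "X \<Longrightarrow> I \<inter> nbhd E x = {}"
  shows "indep_dom E V \<le> indep_dom E (residual I X) + card T1 + (if X then 1 else 2)"
proof -
  obtain K where K: "maximal_indep E (residual I X) K" "card K = indep_dom E (residual I X)"
    using ex_maximal_indep_card_indep_dom finite_residual by blast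
  show ?thesis
    using indep_dom_le_card[OF finite_V maximal_indep_assemble[OF assms K(1)]]
      card_assemble[OF assms K(1)] K(2) by simp
qed

lemma ex_residual_le_indep_dom:
  "\<exists>I X. indep E T1 I \<and> (X \<longrightarrow> I \<inter> nbhd E x = {})
     \<and> indep_dom E (residual I X) + card T1 + (if X then 1 else 2) \<le> indep_dom E V"
proof -
  obtain J where J: "maximal_indep E V J" "card J = indep_dom E V"
    using ex_maximal_indep_card_indep_dom finite_V by blast
  have ind: "indep E V J" using J(1) unfolding maximal_indep_def by simp
  show ?thesis
  proof (intro exI conjI)
    show "indep E T1 (J \<inter> T1)" using ind unfolding indep_def by auto
    show "x \<in> J \<longrightarrow> J \<inter> T1 \<inter> nbhd E x = {}" using ind unfolding indep_def by auto
    have "indep_dom E (residual (J \<inter> T1) (x \<in> J)) \<le> card (J \<inter> T0)"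
      using indep_dom_le_card[OF finite_residual maximal_indep_residual[OF J(1)]] .
    then show "indep_dom E (residual (J \<inter> T1) (x \<in> J)) + card T1 + (if x \<in> J then 1 else 2)
        \<le> indep_dom E V"
      using card_maximal_indep[OF J(1)] J(2) by linarith
  qed
qed

lemma indep_dom_le_alpha_T0: "indep_dom E V \<le> alpha E T0 + card T1 + 1"
  using indep_dom_le_residual[of "{}" True]
    indep_dom_le_alpha_superset[OF finite_T0 residual_subset_T0, of E "{}" True] by simp

lemma almost_well_covered_iff_indep_dom:
  "almost_well_covered E V \<longleftrightarrow> alpha E T0 + card T1 + 1 \<le> indep_dom E V"
  using alpha_eq indep_dom_le_alpha_T0 unfolding almost_well_covered_def by linarith

lemma indep_dom_ge_iff_residual:
  "alpha E T0 + card T1 + 1 \<le> indep_dom E V \<longleftrightarrow>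
     (\<forall>I X. indep E T1 I \<longrightarrow> (X \<longrightarrow> I \<inter> nbhd E x = {}) \<longrightarrow>
        alpha E T0 \<le> indep_dom E (residual I X) + (if X then 0 else 1))"
proof (intro iffI allI impI)
  fix I X
  assume "alpha E T0 + card T1 + 1 \<le> indep_dom E V" "indep E T1 I" "X \<longrightarrow> I \<inter> nbhd E x = {}"
  then show "alpha E T0 \<le> indep_dom E (residual I X) + (if X then 0 else 1)"
    using indep_dom_le_residual[of I X] by (cases X) auto
next
  assume bound: "\<forall>I X. indep E T1 I \<longrightarrow> (X \<longrightarrow> I \<inter> nbhd E x = {}) \<longrightarrow>
        alpha E T0 \<le> indep_dom E (residual I X) + (if X then 0 else 1)"
  obtain I X where "indep E T1 I" "X \<longrightarrow> I \<inter> nbhd E x = {}"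
      "indep_dom E (residual I X) + card T1 + (if X then 1 else 2) \<le> indep_dom E V"
    using ex_residual_le_indep_dom by blast
  with bound show "alpha E T0 + card T1 + 1 \<le> indep_dom E V"
    by (cases X) (auto dest!: spec[of _ I] spec[of _ X])
qed

text \<open>Give every \<open>G\<^sub>0\<close>-neighbour \<open>z\<close> of \<open>y\<close> a second neighbour \<open>w z\<close> in \<open>G\<^sub>0 \<union> G\<^sub>1\<close>. By girth \<open>6\<close>
  these are pairwise non-adjacent and not adjacent to \<open>x\<close>, so a maximal independent set of the
  residual containing them sees no neighbour of \<open>y\<close>.\<close>
lemma ex_maximal_residual_insert_indep:
  assumes xy: "E x y" and y: "y \<in> T0"
  shows "\<exists>I K. indep E T1 I \<and> I \<inter> nbhd E x = {} \<and> maximal_indep E (residual I True) K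
    \<and> indep E T0 (insert y K)"
proof -
  define Z where "Z = {z \<in> T0. E y z}"
  have "\<forall>z \<in> Z. \<exists>w. E z w \<and> w \<noteq> y \<and> (w \<in> T0 \<or> w \<in> T1)"
    using ex_second_neighbour[OF xy] unfolding Z_def by blast
  then obtain w where w: "\<And>z. z \<in> Z \<Longrightarrow> E z (w z) \<and> w z \<noteq> y \<and> (w z \<in> T0 \<or> w z \<in> T1)"
    by metis
  have yZ: "E y z" "z \<in> T0" if "z \<in> Z" for z using that unfolding Z_def by auto
  have w_not_adj: "\<not> E (w z) (w z')" if "z \<in> Z" "z' \<in> Z" for z z'
    using second_neighbours_not_adj[OF yZ(1)[OF that(1)] yZ(1)[OF that(2)]] w[OF that(1)] w[OF that(2)]
    by blast
  have x_not_adj: "\<not> E x (w z)" if z: "z \<in> Z" for z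
  proof
    assume "E x (w z)"
    moreover have "x \<noteq> z" using x_notin_T0 yZ(2)[OF z] by auto
    ultimately show False using no_4cycle[OF xy yZ(1)[OF z]] w[OF z] edge_sym by blast
  qed
  define I where "I = w ` Z \<inter> T1"
  define W0 where "W0 = w ` Z \<inter> T0"
  have I: "indep E T1 I" unfolding indep_def I_def using w_not_adj by blast
  have Ix: "I \<inter> nbhd E x = {}" unfolding I_def using x_not_adj by auto
  have "W0 \<subseteq> residual I True"
    unfolding W0_def I_def residual_def using w_not_adj x_not_adj by (auto simp: mem_nbhd_set_iff)
  then have "indep E (residual I True) W0" unfolding indep_def W0_def using w_not_adj by blast
  then obtain K where K: "W0 \<subseteq> K" "maximal_indep E (residual I True) K"
    using ex_maximal_indep_superset[OF finite_residual] by blast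
  have KH: "K \<subseteq> residual I True" and K_indep: "\<forall>u \<in> K. \<forall>v \<in> K. \<not> E u v"
    using K(2) unfolding maximal_indep_def indep_def by auto
  have "\<not> E y k" if k: "k \<in> K" for k
  proof
    assume "E y k"
    then have kZ: "k \<in> Z" using k KH residual_subset_T0 unfolding Z_def by blast
    show False
    proof (cases "w k \<in> T0")
      case True
      then have "w k \<in> K" using K(1) kZ unfolding W0_def by blast
      then show False using K_indep k w[OF kZ] by blast
    next
      case False
      then have "w k \<in> I" using w[OF kZ] kZ unfolding I_def by blast
      then have "k \<in> nbhd_set E I" using w[OF kZ] edge_sym unfolding mem_nbhd_set_iff by blast
      then show False using k KH unfolding residual_def by auto
    qed
  qed
  then have "indep E T0 (insert y K)"
    using y KH residual_subset_T0 K_indep indep_insert[of T0 K y] unfolding indep_def by blast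
  then show ?thesis using I Ix K(2) by blast
qed

lemma nbhd_x_disjoint_T0:
  assumes "\<forall>I. indep E T1 I \<longrightarrow> I \<inter> nbhd E x = {} \<longrightarrow> alpha E T0 \<le> indep_dom E (residual I True)"
  shows "nbhd E x \<inter> T0 = {}"
proof (rule ccontr)
  assume "nbhd E x \<inter> T0 \<noteq> {}"
  then obtain y where "E x y" "y \<in> T0" by auto
  then obtain I K where I: "indep E T1 I" "I \<inter> nbhd E x = {}"
      and K: "maximal_indep E (residual I True) K" and yK: "indep E T0 (insert y K)"
    using ex_maximal_residual_insert_indep by blast
  have KH: "K \<subseteq> residual I True" using K unfolding maximal_indep_def indep_def by simp
  then have "y \<notin> K" using \<open>E x y\<close> unfolding residual_def by auto
  moreover have "finite K" using KH finite_residual finite_subset by blast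
  moreover have "alpha E T0 \<le> indep_dom E (residual I True)" using assms I by blast
  then have "alpha E T0 \<le> card K" using indep_dom_le_card[OF finite_residual K] by simp
  ultimately show False using card_le_alpha[OF finite_T0 yK] by simp
qed

lemma residual_bound_iff:
  "(\<forall>I X. indep E T1 I \<longrightarrow> (X \<longrightarrow> I \<inter> nbhd E x = {}) \<longrightarrow>
      alpha E T0 \<le> indep_dom E (residual I X) + (if X then 0 else 1))
   \<longleftrightarrow> nbhd E x \<inter> T0 = {} \<and> well_covered E T0
     \<and> (\<forall>I. indep E T1 I \<longrightarrow>
          (I \<inter> nbhd E x = {} \<longrightarrow> alpha E T0 = indep_dom E (T0 - nbhd_set E I))
        \<and> (I \<inter> nbhd E x \<noteq> {} \<longrightarrow> int (alpha E T0) - int (indep_dom E (T0 - nbhd_set E I)) \<le> 1))"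
  (is "?bound \<longleftrightarrow> ?disj \<and> ?wc \<and> ?cond")
proof
  assume ?bound
  then have bound: "alpha E T0 \<le> indep_dom E (residual I X) + (if X then 0 else 1)"
    if "indep E T1 I" "X \<longrightarrow> I \<inter> nbhd E x = {}" for I X
    using that by blast
  have disj: ?disj using bound[of _ True] by (intro nbhd_x_disjoint_T0) simp
  have res: "residual I X = T0 - nbhd_set E I" for I X
    using residual_eq_if_nbhd_x_disjoint[OF disj] .
  have eq: "alpha E T0 = indep_dom E (T0 - nbhd_set E I)"
    if "indep E T1 I" "I \<inter> nbhd E x = {}" for I
  proof (rule antisym)
    show "alpha E T0 \<le> indep_dom E (T0 - nbhd_set E I)"
      using bound[of I True] that res[of I True] by simp
  qed (rule indep_dom_le_alpha_superset[OF finite_T0], blast)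
  have le: "alpha E T0 \<le> indep_dom E (T0 - nbhd_set E I) + 1" if "indep E T1 I" for I
    using bound[of I False] that res[of I False] by simp
  have ?cond
  proof (intro allI impI conjI)
    fix I assume "indep E T1 I"
    then show "alpha E T0 = indep_dom E (T0 - nbhd_set E I)" if "I \<inter> nbhd E x = {}"
      using eq that by blast
    show "int (alpha E T0) - int (indep_dom E (T0 - nbhd_set E I)) \<le> 1"
      using le[OF \<open>indep E T1 I\<close>] by linarith
  qed
  moreover have ?wc using eq[of "{}"] unfolding well_covered_def by (simp add: nbhd_set_def)
  ultimately show "?disj \<and> ?wc \<and> ?cond" using disj by blast
next
  assume "?disj \<and> ?wc \<and> ?cond"
  then have disj: ?disj and cond: ?cond by blast+
  show ?bound
  proof (intro allI impI)
    fix I X assume I: "indep E T1 I" and IX: "X \<longrightarrow> I \<inter> nbhd E x = {}"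
    have res: "residual I X = T0 - nbhd_set E I"
      using residual_eq_if_nbhd_x_disjoint[OF disj] .
    show "alpha E T0 \<le> indep_dom E (residual I X) + (if X then 0 else 1)"
    proof (cases "I \<inter> nbhd E x = {}")
      case True
      then show ?thesis using cond I res by simp
    next
      case False
      then have "int (alpha E T0) - int (indep_dom E (T0 - nbhd_set E I)) \<le> 1"
        using cond I by blast
      then show ?thesis using False IX res by simp
    qed
  qed
qed

end

theorem theorem16:
  fixes V :: "'a set" and E :: "'a \<Rightarrow> 'a \<Rightarrow> bool" and x :: 'a
  assumes "graph V E"
    and "girth_at_least V E 6"
    and "x \<in> V" and "has_type V E 2 x"
    and "\<forall>v \<in> V. has_type V E 2 v \<longrightarrow> v = x"
    and "\<forall>v \<in> V. \<forall>k \<ge> 3. \<not> has_type V E k v"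
  shows "almost_well_covered E V \<longleftrightarrow>
    ((\<forall>v \<in> V. internal V E v \<and> v \<noteq> x \<longrightarrow> has_type V E 0 v \<or> has_type V E 1 v)
     \<and> nbhd E x \<inter> type_set V E 0 = {}
     \<and> well_covered E (type_set V E 0)
     \<and> (\<forall>I. indep E (type_set V E 1) I \<longrightarrow>
          (I \<inter> nbhd E x = {} \<longrightarrow>
             alpha E (type_set V E 0) = indep_dom E (type_set V E 0 - nbhd_set E I))
        \<and> (I \<inter> nbhd E x \<noteq> {} \<longrightarrow>
             int (alpha E (type_set V E 0)) - int (indep_dom E (type_set V E 0 - nbhd_set E I)) \<le> 1)))"
proof -
  interpret girth6_type2_graph V E x
    using assms by unfold_locales
  obtain l1 l2 where "l1 \<noteq> l2" "leaves_at x = {l1, l2}"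
    using card_leaves_at_x by (meson card_2_iff)
  then interpret girth6_type2_graph_leaves V E x l1 l2
    by unfold_locales
  show ?thesis
    using almost_well_covered_iff_indep_dom indep_dom_ge_iff_residual residual_bound_iff
      internal_type_0_or_1 by simp
qed

end
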